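(* Let $T$ be a real-valued treatment and $X$ covariates, with conditional density $p(t\mid x)$ of $T$ given $X=x$. Let $S_k=[a_k,a_k+\ell)$ be bins of common length $\ell$ with midpoints $c_k = a_k+\ell/2$, and define \[ r_k(t\mid x) = \frac{p(t\mid x)\,\mathbf 1(t\in S_k)}{\int_{S_k} p(s\mid x)\,ds}. \] Assume $f$ and $p(t\mid x)$ are twice continuously differentiable, the conditional density $p(t\mid x)$ is positive, and $|f''|\le M$ for some $M>0$. Then for every $x$ and uniformly in $k$, \[ \int f(t)\, r_k(t\mid x)\,dt = f(c_k) + O(\ell^2) \quad \text{as } \ell\to 0. \] *)

theory Defs
  imports "HOL-Analysis.Analysis"
begin

definition C2 :: "(real \<Rightarrow> real) \<Rightarrow> bool" where
  "C2 g \<longleftrightarrow> (\<exists>g1 g2. (\<forall>t. (g has_real_derivative g1 t) (at t)) \<and>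
                      (\<forall>t. (g1 has_real_derivative g2 t) (at t)) \<and>
                      continuous_on UNIV g2)"

definition bin :: "real \<Rightarrow> real \<Rightarrow> real set" where
  "bin a l = {a..<a+l}"

definition bin_density :: "('x \<Rightarrow> real \<Rightarrow> real) \<Rightarrow> 'x \<Rightarrow> real \<Rightarrow> real \<Rightarrow> real \<Rightarrow> real" where
  "bin_density p x a l t = p x t * indicator (bin a l) t / integral (bin a l) (\<lambda>s. p x s)"

end

theory Submission
  imports Defs
begin

(* Let c be the midpoint of the bin S and P its mass under p. The bin average minus f c is
   (1/P) times the integral over S of (f t - f c) p t. Subtracting f'(c) p(c) (t - c), which
   integrates to zero because S is centred at c, leaves the Taylor remainder
   (f t - f c - f'(c)(t - c)) p t = O(M (t - c)^2 p t) and, by the mean value theorem,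
   f'(c)(t - c)(p t - p c) = O(|f'(c)| L (t - c)^2) with L a bound for |p'|. Integrating and
   dividing by P >= m l, where m is a positive lower bound of p, gives the error bound
   (M/4 + F L/(4 m)) l^2; for bins inside a compact range [lo, hi] the bounds F on |f'|,
   L and m are uniform by continuity. *)

lemma integral_bin_density:
  "integral UNIV (\<lambda>t. f t * bin_density p x a l t)
     = integral {a..a+l} (\<lambda>t. f t * p x t) / integral {a..a+l} (p x)"
proof -
  have bin_closed: "integral (bin a l) g = integral {a..a+l} g" for g :: "real \<Rightarrow> real"
  proof (rule integral_subset_negligible)
    show "negligible ({a..a+l} - bin a l)"
      by (rule negligible_subset[of "{a+l}"]) (auto simp: bin_def)
  qed (auto simp: bin_def)
  have "integral UNIV (\<lambda>t. f t * bin_density p x a l t)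
      = integral UNIV (\<lambda>t. if t \<in> bin a l then f t * p x t / integral (bin a l) (p x) else 0)"
    by (intro arg_cong[where f = "integral UNIV"] ext) (simp add: bin_density_def indicator_def)
  also have "\<dots> = integral (bin a l) (\<lambda>t. f t * p x t / integral (bin a l) (p x))"
    by (rule integral_restrict_UNIV)
  finally show ?thesis by (simp add: bin_closed)
qed

lemma integral_minus_centered_linear:
  fixes g :: "real \<Rightarrow> real"
  assumes "g integrable_on {a..b}" "a \<le> b"
  shows "integral {a..b} (\<lambda>t. g t - k * (t - (a + b) / 2)) = integral {a..b} g"
proof -
  have "integral {a..b} (\<lambda>t. t - (a + b) / 2) = integral {a..b} (\<lambda>t. t) - integral {a..b} (\<lambda>t. (a + b) / 2)"
    by (intro integral_diff ident_integrable_on integrable_const_ivl)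
  then have "integral {a..b} (\<lambda>t. t - (a + b) / 2) = 0"
    using assms(2) by (simp add: power2_eq_square field_simps)
  moreover have "(\<lambda>t. k * (t - (a + b) / 2)) integrable_on {a..b}"
    by (intro integrable_continuous_interval continuous_intros)
  ultimately show ?thesis
    using assms(1) by (simp add: integral_diff)
qed

lemma taylor_linear_remainder_bound:
  fixes f f' f'' :: "real \<Rightarrow> real"
  assumes f': "\<And>s. s \<in> {u..v} \<Longrightarrow> (f has_real_derivative f' s) (at s)"
    and f'': "\<And>s. s \<in> {u..v} \<Longrightarrow> (f' has_real_derivative f'' s) (at s)"
    and M: "\<And>s. s \<in> {u..v} \<Longrightarrow> \<bar>f'' s\<bar> \<le> M"
    and t: "t \<in> {u..v}" and c: "c \<in> {u..v}"
  shows "\<bar>f t - f c - f' c * (t - c)\<bar> \<le> M * (t - c)\<^sup>2"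
proof -
  define J where "J = {min t c..max t c}"
  have J: "J \<subseteq> {u..v}" "t \<in> J" "c \<in> J"
    using t c by (auto simp: J_def)
  have "M \<ge> 0"
    using M[OF c] by linarith
  have f'_near_c: "\<bar>f' s - f' c\<bar> \<le> M * \<bar>t - c\<bar>" if "s \<in> J" for s
  proof -
    have "\<bar>f' s - f' c\<bar> \<le> M * \<bar>s - c\<bar>"
    proof (rule field_differentiable_bound[of J f' f'', simplified])
      show "(f' has_real_derivative f'' z) (at z within J)" if "z \<in> J" for z
        using f'' J(1) that by (meson has_field_derivative_at_within subsetD)
      show "\<bar>f'' z\<bar> \<le> M" if "z \<in> J" for z
        using M J(1) that by (meson subsetD)
    qed (use J that in \<open>auto simp: J_def\<close>)
    also have "\<dots> \<le> M * \<bar>t - c\<bar>"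
    proof -
      have "\<bar>s - c\<bar> \<le> \<bar>t - c\<bar>"
        using that unfolding J_def by (auto simp: min_def max_def split: if_splits)
      then show ?thesis
        using \<open>M \<ge> 0\<close> by (rule mult_left_mono)
    qed
    finally show ?thesis .
  qed
  have "\<bar>(f t - f' c * t) - (f c - f' c * c)\<bar> \<le> M * \<bar>t - c\<bar> * \<bar>t - c\<bar>"
  proof (rule field_differentiable_bound[of J _ "\<lambda>s. f' s - f' c", simplified])
    show "((\<lambda>s. f s - f' c * s) has_real_derivative f' s - f' c) (at s within J)" if "s \<in> J" for s
    proof -
      have "(f has_real_derivative f' s) (at s)"
        using f' J(1) that by (meson subsetD)
      then have "((\<lambda>s. f s - f' c * s) has_real_derivative f' s - f' c) (at s)"
        by (auto intro!: derivative_eq_intros)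
      then show ?thesis
        by (rule has_field_derivative_at_within)
    qed
    show "\<bar>f' s - f' c\<bar> \<le> M * \<bar>t - c\<bar>" if "s \<in> J" for s
      using f'_near_c that .
  qed (use J in \<open>simp_all add: J_def\<close>)
  then show ?thesis
    by (simp add: power2_eq_square algebra_simps)
qed

lemma weighted_linearization_bound:
  fixes f f' f'' w w' :: "real \<Rightarrow> real"
  assumes f': "\<And>s. s \<in> {u..v} \<Longrightarrow> (f has_real_derivative f' s) (at s)"
    and f'': "\<And>s. s \<in> {u..v} \<Longrightarrow> (f' has_real_derivative f'' s) (at s)"
    and M: "\<And>s. s \<in> {u..v} \<Longrightarrow> \<bar>f'' s\<bar> \<le> M"
    and w': "\<And>s. s \<in> {u..v} \<Longrightarrow> (w has_real_derivative w' s) (at s)"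
    and L: "\<And>s. s \<in> {u..v} \<Longrightarrow> \<bar>w' s\<bar> \<le> L"
    and "0 \<le> w t" and t: "t \<in> {u..v}" and c: "c \<in> {u..v}"
  shows "\<bar>(f t - f c) * w t - f' c * w c * (t - c)\<bar> \<le> (M * w t + \<bar>f' c\<bar> * L) * (t - c)\<^sup>2"
proof -
  have taylor: "\<bar>(f t - f c - f' c * (t - c)) * w t\<bar> \<le> M * (t - c)\<^sup>2 * w t"
    using taylor_linear_remainder_bound[OF f' f'' M t c] \<open>0 \<le> w t\<close>
    by (simp add: abs_mult mult_right_mono)
  have "norm (w t - w c) \<le> L * norm (t - c)"
  proof (rule field_differentiable_bound)
    show "(w has_real_derivative w' s) (at s within {u..v})" if "s \<in> {u..v}" for s
      using w'[OF that] by (rule has_field_derivative_at_within)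
  qed (use L t c in simp_all)
  then have "\<bar>t - c\<bar> * \<bar>w t - w c\<bar> \<le> \<bar>t - c\<bar> * (L * \<bar>t - c\<bar>)"
    by (intro mult_left_mono) simp_all
  also have "\<dots> = L * (t - c)\<^sup>2"
    by (simp add: power2_eq_square mult.left_commute)
  finally have mvt: "\<bar>f' c * (t - c) * (w t - w c)\<bar> \<le> \<bar>f' c\<bar> * L * (t - c)\<^sup>2"
    by (simp add: abs_mult mult_left_mono mult.assoc)
  have "(f t - f c) * w t - f' c * w c * (t - c)
      = (f t - f c - f' c * (t - c)) * w t + f' c * (t - c) * (w t - w c)"
    by (simp add: algebra_simps)
  then have "\<bar>(f t - f c) * w t - f' c * w c * (t - c)\<bar>
      \<le> \<bar>(f t - f c - f' c * (t - c)) * w t\<bar> + \<bar>f' c * (t - c) * (w t - w c)\<bar>"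
    by (simp only: abs_triangle_ineq)
  also have "\<dots> \<le> M * (t - c)\<^sup>2 * w t + \<bar>f' c\<bar> * L * (t - c)\<^sup>2"
    using taylor mvt by (rule add_mono)
  finally show ?thesis
    by (simp add: algebra_simps)
qed

lemma weighted_midpoint_deviation_bound:
  fixes f f' f'' w w' :: "real \<Rightarrow> real"
  assumes l: "0 \<le> l"
    and f': "\<And>t. t \<in> {a..a+l} \<Longrightarrow> (f has_real_derivative f' t) (at t)"
    and f'': "\<And>t. t \<in> {a..a+l} \<Longrightarrow> (f' has_real_derivative f'' t) (at t)"
    and M: "\<And>t. t \<in> {a..a+l} \<Longrightarrow> \<bar>f'' t\<bar> \<le> M"
    and F: "\<bar>f' (a + l/2)\<bar> \<le> F"
    and w': "\<And>t. t \<in> {a..a+l} \<Longrightarrow> (w has_real_derivative w' t) (at t)"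
    and L: "\<And>t. t \<in> {a..a+l} \<Longrightarrow> \<bar>w' t\<bar> \<le> L"
    and w_nonneg: "\<And>t. t \<in> {a..a+l} \<Longrightarrow> 0 \<le> w t"
  shows "\<bar>integral {a..a+l} (\<lambda>t. (f t - f (a + l/2)) * w t)\<bar>
           \<le> (M * integral {a..a+l} w + F * L * l) * (l/2)\<^sup>2"
proof -
  define S where "S = {a..a+l}"
  define c where "c = a + l/2"
  define D where "D t = (f t - f c) * w t - f' c * w c * (t - c)" for t
  have c: "c \<in> {a..a+l}"
    using l by (simp add: c_def)
  have "0 \<le> F" "0 \<le> L" "0 \<le> M"
    using F L[OF c] M[OF c] by (meson abs_ge_zero order_trans)+
  have cont_f: "continuous_on S f" and cont_w: "continuous_on S w"
    using f' w' unfolding S_def by (meson DERIV_isCont continuous_at_imp_continuous_on)+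
  have D_bound: "\<bar>D t\<bar> \<le> (M * w t + F * L) * (l/2)\<^sup>2" if t: "t \<in> S" for t
  proof -
    have t': "t \<in> {a..a+l}"
      using t by (simp add: S_def)
    have "\<bar>D t\<bar> \<le> (M * w t + \<bar>f' c\<bar> * L) * (t - c)\<^sup>2"
      unfolding D_def using weighted_linearization_bound[OF f' f'' M w' L w_nonneg[OF t'] t' c]
      by blast
    also have "\<dots> \<le> (M * w t + F * L) * (l/2)\<^sup>2"
    proof (rule mult_mono)
      have "\<bar>t - c\<bar> \<le> l/2"
        using t unfolding S_def c_def atLeastAtMost_iff by arith
      then show "(t - c)\<^sup>2 \<le> (l/2)\<^sup>2"
        using power_mono[of "\<bar>t - c\<bar>" "l/2" 2] by simp
      show "M * w t + \<bar>f' c\<bar> * L \<le> M * w t + F * L"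
        using F \<open>0 \<le> L\<close> by (simp add: c_def mult_right_mono)
      show "0 \<le> M * w t + F * L"
        using w_nonneg[OF t'] \<open>0 \<le> F\<close> \<open>0 \<le> L\<close> \<open>0 \<le> M\<close> by simp
    qed simp
    finally show ?thesis .
  qed
  have "integral S (\<lambda>t. (f t - f c) * w t) = integral S D"
  proof -
    have "(\<lambda>t. (f t - f c) * w t) integrable_on S"
      using cont_f cont_w unfolding S_def by (intro integrable_continuous_interval continuous_intros)
    then show ?thesis
      using integral_minus_centered_linear[of _ a "a + l" "f' c * w c"] l
      by (simp add: D_def[abs_def] S_def c_def add_divide_distrib mult.assoc)
  qed
  also have "norm (integral S D) \<le> integral S (\<lambda>t. (M * w t + F * L) * (l/2)\<^sup>2)"
  proof (rule integral_norm_bound_integral)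
    show "D integrable_on S"
      unfolding D_def using cont_f cont_w unfolding S_def
      by (intro integrable_continuous_interval continuous_intros)
    show "(\<lambda>t. (M * w t + F * L) * (l/2)\<^sup>2) integrable_on S"
      using cont_w unfolding S_def
      by (intro integrable_continuous_interval continuous_intros)
  qed (use D_bound in simp)
  also have "integral S (\<lambda>t. (M * w t + F * L) * (l/2)\<^sup>2) = (M * integral S w + F * L * l) * (l/2)\<^sup>2"
  proof -
    have "w integrable_on S"
      using cont_w unfolding S_def by (rule integrable_continuous_interval)
    then have "integral S (\<lambda>t. M * w t + F * L) = M * integral S w + F * L * l"
      using l by (subst integral_add) (auto simp: S_def intro: integrable_on_mult_right)
    then show ?thesis
      by simp
  qed
  finally show ?thesis
    by (simp add: S_def c_def)
qed

lemma weighted_average_midpoint_error: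
  fixes f f' f'' w w' :: "real \<Rightarrow> real"
  assumes l: "0 < l"
    and f': "\<And>t. t \<in> {a..a+l} \<Longrightarrow> (f has_real_derivative f' t) (at t)"
    and f'': "\<And>t. t \<in> {a..a+l} \<Longrightarrow> (f' has_real_derivative f'' t) (at t)"
    and M: "\<And>t. t \<in> {a..a+l} \<Longrightarrow> \<bar>f'' t\<bar> \<le> M"
    and F: "\<bar>f' (a + l/2)\<bar> \<le> F"
    and w': "\<And>t. t \<in> {a..a+l} \<Longrightarrow> (w has_real_derivative w' t) (at t)"
    and L: "\<And>t. t \<in> {a..a+l} \<Longrightarrow> \<bar>w' t\<bar> \<le> L"
    and m: "0 < m" "\<And>t. t \<in> {a..a+l} \<Longrightarrow> m \<le> w t"
  shows "\<bar>integral {a..a+l} (\<lambda>t. f t * w t) / integral {a..a+l} w - f (a + l/2)\<bar>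
           \<le> (M/4 + F * L / (4 * m)) * l\<^sup>2"
proof -
  define S where "S = {a..a+l}"
  define c where "c = a + l/2"
  define P where "P = integral S w"
  have w_nonneg: "0 \<le> w t" if "t \<in> S" for t
    using m that unfolding S_def by (meson less_le_trans less_imp_le)
  have "0 \<le> F" "0 \<le> L"
    using F L[of c] l by (auto simp: c_def intro: order_trans[OF abs_ge_zero])
  have cont_f: "continuous_on S f" and cont_w: "continuous_on S w"
    using f' w' unfolding S_def by (meson DERIV_isCont continuous_at_imp_continuous_on)+
  have int_w: "w integrable_on S" and int_fw: "(\<lambda>t. f t * w t) integrable_on S"
    using cont_f cont_w unfolding S_def by (auto intro!: integrable_continuous_interval continuous_intros)
  have "integral S (\<lambda>_. m) \<le> P"
    unfolding P_def using int_w m(2) by (intro integral_le) (auto simp: S_def)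
  then have P_ge: "m * l \<le> P"
    using l by (simp add: S_def mult.commute)
  then have "0 < P"
    using l m(1) by (smt (verit) mult_pos_pos)
  have "integral S (\<lambda>t. (f t - f c) * w t) = integral S (\<lambda>t. f t * w t) - f c * P"
    using int_fw integrable_on_mult_right[OF int_w]
    by (simp add: P_def algebra_simps integral_diff)
  moreover have "\<bar>integral S (\<lambda>t. (f t - f c) * w t)\<bar> \<le> (M * P + F * L * l) * (l/2)\<^sup>2"
    using weighted_midpoint_deviation_bound[OF less_imp_le[OF l] f' f'' M F w' L] w_nonneg
    by (simp add: S_def c_def P_def)
  ultimately have "\<bar>integral S (\<lambda>t. f t * w t) / P - f c\<bar> \<le> (M + F * L * l / P) * (l/2)\<^sup>2"
    using \<open>0 < P\<close> by (simp add: divide_simps abs_divide)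
  also have "\<dots> \<le> (M + F * L * l / (m * l)) * (l/2)\<^sup>2"
    using P_ge m l \<open>0 \<le> F\<close> \<open>0 \<le> L\<close> \<open>0 < P\<close>
    by (intro mult_right_mono add_left_mono divide_left_mono) auto
  also have "\<dots> = (M/4 + F * L / (4 * m)) * l\<^sup>2"
    using m l by (simp add: field_simps power2_eq_square)
  finally show ?thesis
    by (simp add: P_def S_def c_def)
qed

lemma compact_continuous_pos_lower_bound:
  fixes g :: "'a::topological_space \<Rightarrow> real"
  assumes "compact K" "continuous_on K g" "\<And>t. t \<in> K \<Longrightarrow> 0 < g t"
  obtains m where "0 < m" "\<And>t. t \<in> K \<Longrightarrow> m \<le> g t"
proof (cases "K = {}")
  case True
  then show ?thesis
    using that[of 1] by simp
next
  case False
  then obtain t0 where "t0 \<in> K" "\<And>t. t \<in> K \<Longrightarrow> g t0 \<le> g t"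
    using continuous_attains_inf[OF assms(1) False assms(2)] by blast
  then show ?thesis
    using that assms(3) by blast
qed

theorem lemma1:
  fixes f :: "real \<Rightarrow> real" and p :: "'x \<Rightarrow> real \<Rightarrow> real" and M :: real
  assumes "C2 f"
    and "\<And>x. C2 (p x)"
    and "\<And>x t. p x t > 0"
    and "M > 0"
    and "\<And>t. \<bar>deriv (deriv f) t\<bar> \<le> M"
  shows "\<forall>x lo hi. \<exists>C \<delta>. \<delta> > 0 \<and>
           (\<forall>l a. 0 < l \<and> l < \<delta> \<and> lo \<le> a \<and> a + l \<le> hi \<longrightarrow>
              \<bar>integral UNIV (\<lambda>t. f t * bin_density p x a l t) - f (a + l / 2)\<bar> \<le> C * l\<^sup>2)"
proof (intro allI)
  fix x lo hi
  obtain f' f'' where f': "\<And>t. (f has_real_derivative f' t) (at t)"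
    and f'': "\<And>t. (f' has_real_derivative f'' t) (at t)"
    using assms(1) unfolding C2_def by blast
  obtain p' p'' where p': "\<And>t. (p x has_real_derivative p' t) (at t)"
    and p'': "\<And>t. (p' has_real_derivative p'' t) (at t)"
    using assms(2)[of x] unfolding C2_def by blast
  have "deriv f = f'"
    using f' by (simp add: DERIV_imp_deriv fun_eq_iff)
  moreover have "deriv f' = f''"
    using f'' by (simp add: DERIV_imp_deriv fun_eq_iff)
  ultimately have "deriv (deriv f) = f''"
    by simp
  then have M: "\<bar>f'' t\<bar> \<le> M" for t
    using assms(5)[of t] by simp
  have cont: "continuous_on {lo..hi} f'" "continuous_on {lo..hi} p'" "continuous_on {lo..hi} (p x)"
    using f'' p'' p' by (meson DERIV_isCont continuous_at_imp_continuous_on)+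
  obtain F where F: "\<And>t. t \<in> {lo..hi} \<Longrightarrow> \<bar>f' t\<bar> \<le> F"
    using continuous_on_compact_bound[OF compact_Icc cont(1)] by auto
  obtain L where L: "\<And>t. t \<in> {lo..hi} \<Longrightarrow> \<bar>p' t\<bar> \<le> L"
    using continuous_on_compact_bound[OF compact_Icc cont(2)] by auto
  obtain m where m: "0 < m" "\<And>t. t \<in> {lo..hi} \<Longrightarrow> m \<le> p x t"
    using compact_continuous_pos_lower_bound[OF compact_Icc cont(3)] assms(3) by blast
  have "\<bar>integral UNIV (\<lambda>t. f t * bin_density p x a l t) - f (a + l / 2)\<bar> \<le> (M/4 + F * L / (4 * m)) * l\<^sup>2"
    if "0 < l" "lo \<le> a" "a + l \<le> hi" for l a
    unfolding integral_bin_density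
    by (rule weighted_average_midpoint_error[OF \<open>0 < l\<close> f' f'' M _ p' L m(1)])
      (use that F m(2) in auto)
  then show "\<exists>C \<delta>. \<delta> > 0 \<and>
           (\<forall>l a. 0 < l \<and> l < \<delta> \<and> lo \<le> a \<and> a + l \<le> hi \<longrightarrow>
              \<bar>integral UNIV (\<lambda>t. f t * bin_density p x a l t) - f (a + l / 2)\<bar> \<le> C * l\<^sup>2)"
    by (intro exI[of _ "M/4 + F * L / (4 * m)"] exI[of _ 1]) auto
qed

end
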